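(* Let $\mathcal R$ be a species of tree on $T_0=\{1,\dots,n\}$ and $A=\sum_{T\in\mathcal R}\lambda(T)A(T)$ with $\lambda(T)\in\mathbf Q$. Then $A$ is diagonalizable and its eigenvalues are $0$ and the numbers $$\sum_{T\in\mathcal R,\ T\supset T_1}\lambda(T)\,n(T),\qquad T_1\in\mathcal R.$$
   Context: A species of tree is a family $\mathcal R$ of subsets of $T_0$ containing $T_0$, each of cardinality $\ge 2$, any two of which are either disjoint or nested. $n(T)$ is the cardinality of $T$. For $T$ with $n(T)\ge2$, $A(T)=(\alpha_{i,j})$ is the $n\times n$ matrix with $\alpha_{i,j}=-1$ if $i\ne j$, $\{i,j\}\subset T$, $\alpha_{i,i}=n(T)-1$ if $i\in T$, and $0$ otherwise. *)

theory Defs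
  imports "Jordan_Normal_Form.Char_Poly"
begin

text \<open>Species of tree on T0 = {0..<n} (0-based indices, matching JNF matrix indexing).\<close>
definition species_of_tree :: "nat \<Rightarrow> nat set set \<Rightarrow> bool" where
  "species_of_tree n R \<longleftrightarrow> {0..<n} \<in> R \<and>
     (\<forall>T\<in>R. T \<subseteq> {0..<n} \<and> card T \<ge> 2) \<and>
     (\<forall>S\<in>R. \<forall>T\<in>R. S \<inter> T = {} \<or> S \<subseteq> T \<or> T \<subseteq> S)"

definition tree_mat :: "nat \<Rightarrow> nat set \<Rightarrow> rat mat" where
  "tree_mat n T = mat n n (\<lambda>(i,j).
     if i \<in> T \<and> j \<in> T then (if i = j then of_nat (card T) - 1 else -1) else 0)"

definition species_mat :: "nat \<Rightarrow> nat set set \<Rightarrow> (nat set \<Rightarrow> rat) \<Rightarrow> rat mat" where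
  "species_mat n R lam = mat n n (\<lambda>ij. \<Sum>T\<in>R. lam T * tree_mat n T $$ ij)"

definition diagonalizable_mat :: "'a :: semiring_1 mat \<Rightarrow> bool" where
  "diagonalizable_mat A \<longleftrightarrow> (\<exists>D. diagonal_mat D \<and> similar_mat A D)"

end

(*
  Every vector f supported on a member T1 of the species, summing to zero, and constant on each
  smaller member inside T1, is an eigenvector of A with eigenvalue the sum of lam T * card T over
  the members T containing T1: by laminarity a member either contains T1, and then A(T) multiplies
  f by card T, or f is constant on it, and then A(T) kills f.  Constant vectors are killed by A.

  For 0 < i < n let T(i) be the least member containing i and some smaller index.  The maximal
  proper submembers of T(i), together with the singletons they miss, cut T(i) into blocks; let B
  be the block of i and L the union of the blocks containing an index below i.  The vector equal
  to card B on L and to - card L on B is of the above kind for T1 = T(i).  With the constant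
  vector this gives n pairwise orthogonal eigenvectors (of two of them, either the supports lie in
  disjoint members, or one is constant on the support of the other), and every member of the
  species arises as some T(i).
*)
theory Submission
  imports Defs
begin

section \<open>Diagonalisation by an orthogonal eigenbasis\<close>

lemma eigenvalue_similar_diagonal_iff:
  fixes A D :: "'a :: field mat"
  assumes sim: "similar_mat A D" and diag: "diagonal_mat D" and D: "D \<in> carrier_mat n n"
  shows "eigenvalue A k \<longleftrightarrow> (\<exists>i<n. D $$ (i,i) = k)"
proof -
  have A: "A \<in> carrier_mat n n" using similar_matD[OF sim] D by auto
  have "upper_triangular D" using diag D unfolding diagonal_mat_def upper_triangular_def by auto
  then have "char_poly D = (\<Prod>a \<leftarrow> diag_mat D. [:- a, 1:])"
    by (rule char_poly_upper_triangular[OF D])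
  moreover have "eigenvalue A k \<longleftrightarrow> poly (char_poly D) k = 0"
    using eigenvalue_root_char_poly[OF A] char_poly_similar[OF sim] by simp
  ultimately show ?thesis
    using D by (auto simp: poly_prod_list prod_list_zero_iff diag_mat_def)
qed

lemma similar_diagonal_if_orthogonal_eigenbasis:
  fixes A :: "'a :: field mat" and v :: "nat \<Rightarrow> 'a vec" and c :: "nat \<Rightarrow> 'a"
  assumes A: "A \<in> carrier_mat n n"
    and v: "\<And>i. i < n \<Longrightarrow> v i \<in> carrier_vec n"
    and eigen: "\<And>i. i < n \<Longrightarrow> A *\<^sub>v v i = c i \<cdot>\<^sub>v v i"
    and orth: "\<And>i j. i < n \<Longrightarrow> j < n \<Longrightarrow> i \<noteq> j \<Longrightarrow> v i \<bullet> v j = 0"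
    and nondeg: "\<And>i. i < n \<Longrightarrow> v i \<bullet> v i \<noteq> 0"
  shows "similar_mat A (mat n n (\<lambda>(i,j). if i = j then c i else 0))"
proof -
  define D where "D = mat n n (\<lambda>(i,j). if i = j then c i else 0)"
  define P where "P = mat n n (\<lambda>(x,i). v i $ x)"
  \<comment> \<open>by orthogonality, the transpose of \<open>P\<close> with rescaled rows is its inverse\<close>
  define Q where "Q = mat n n (\<lambda>(i,x). v i $ x / (v i \<bullet> v i))"
  have carr: "{A, D, P, Q} \<subseteq> carrier_mat n n" using A unfolding D_def P_def Q_def by auto
  have QP: "Q * P = 1\<^sub>m n"
  proof (rule eq_matI)
    fix i j assume "i < dim_row (1\<^sub>m n)" "j < dim_col (1\<^sub>m n)"
    then have ij: "i < n" "j < n" by auto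
    have "(Q * P) $$ (i,j) = (v i \<bullet> v j) / (v i \<bullet> v i)"
      using ij v[of j] unfolding P_def Q_def by (simp add: scalar_prod_def sum_divide_distrib)
    also have "\<dots> = 1\<^sub>m n $$ (i,j)" using ij orth nondeg by auto
    finally show "(Q * P) $$ (i,j) = 1\<^sub>m n $$ (i,j)" .
  qed (use carr in auto)
  then have PQ: "P * Q = 1\<^sub>m n" using mat_mult_left_right_inverse carr by blast
  have AP: "A * P = P * D"
  proof (rule eq_matI)
    fix x i assume "x < dim_row (P * D)" "i < dim_col (P * D)"
    then have xi: "x < n" "i < n" using carr by auto
    have "(A * P) $$ (x,i) = (A *\<^sub>v v i) $ x"
      using xi A v[OF xi(2)] unfolding P_def by (auto simp: mult_mat_vec_def scalar_prod_def)
    also have "\<dots> = (\<Sum>k\<in>{0..<n}. v k $ x * (if k = i then c i else 0))"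
      using xi eigen v[OF xi(2)] by (simp add: if_distrib sum.delta mult.commute cong: if_cong)
    also have "\<dots> = (P * D) $$ (x,i)"
      using xi unfolding P_def D_def by (auto simp: scalar_prod_def intro!: sum.cong)
    finally show "(A * P) $$ (x,i) = (P * D) $$ (x,i)" .
  qed (use carr in auto)
  have "A = P * D * Q"
  proof -
    have "A = A * (P * Q)" using A PQ by simp
    also have "\<dots> = P * D * Q" using carr AP by (simp add: assoc_mult_mat[symmetric, of A n n P n Q n])
    finally show ?thesis .
  qed
  then show ?thesis unfolding D_def[symmetric] using similar_matI[OF carr PQ QP] by blast
qed

lemma orthogonal_eigenbasis_diagonalizable:
  fixes A :: "'a :: field mat" and v :: "nat \<Rightarrow> 'a vec" and c :: "nat \<Rightarrow> 'a"
  assumes A: "A \<in> carrier_mat n n"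
    and v: "\<And>i. i < n \<Longrightarrow> v i \<in> carrier_vec n"
    and eigen: "\<And>i. i < n \<Longrightarrow> A *\<^sub>v v i = c i \<cdot>\<^sub>v v i"
    and orth: "\<And>i j. i < n \<Longrightarrow> j < n \<Longrightarrow> i \<noteq> j \<Longrightarrow> v i \<bullet> v j = 0"
    and nondeg: "\<And>i. i < n \<Longrightarrow> v i \<bullet> v i \<noteq> 0"
  shows "diagonalizable_mat A \<and> {k. eigenvalue A k} = c ` {0..<n}"
proof -
  define D where "D = mat n n (\<lambda>(i,j). if i = j then c i else (0::'a))"
  have sim: "similar_mat A D"
    unfolding D_def by (rule similar_diagonal_if_orthogonal_eigenbasis[OF assms])
  have diag: "diagonal_mat D" unfolding D_def diagonal_mat_def by auto
  have "eigenvalue A k \<longleftrightarrow> k \<in> c ` {0..<n}" for k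
    using eigenvalue_similar_diagonal_iff[OF sim diag, of n k] unfolding D_def by auto
  then show ?thesis using sim diag unfolding diagonalizable_mat_def by blast
qed

lemma sum_mult_eq_0_if_const_on_support:
  fixes u v :: "'b \<Rightarrow> 'a :: semiring_0"
  assumes "finite I" "U \<subseteq> I" and supp: "\<And>x. x \<notin> U \<Longrightarrow> u x = 0" and "sum u U = 0"
    and const: "\<And>x. x \<in> U \<Longrightarrow> v x = c"
  shows "(\<Sum>x\<in>I. u x * v x) = 0"
proof -
  have "(\<Sum>x\<in>I. u x * v x) = (\<Sum>x\<in>U. u x * c)"
    using assms(1,2) supp const by (auto intro!: sum.mono_neutral_cong_right)
  also have "\<dots> = 0" by (simp add: sum_distrib_right[symmetric] \<open>sum u U = 0\<close>)
  finally show ?thesis .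
qed

section \<open>Tree matrices\<close>

lemma dim_tree_mat [simp]: "dim_row (tree_mat n T) = n" "dim_col (tree_mat n T) = n"
  unfolding tree_mat_def by simp_all

lemma dim_species_mat [simp]: "dim_row (species_mat n R lam) = n" "dim_col (species_mat n R lam) = n"
  unfolding species_mat_def by simp_all

lemma tree_mat_mult_vec:
  assumes T: "T \<subseteq> {0..<n}" and x: "x < n"
  shows "(tree_mat n T *\<^sub>v vec n f) $ x =
    (if x \<in> T then of_nat (card T) * f x - sum f T else 0)"
proof -
  have "(tree_mat n T *\<^sub>v vec n f) $ x =
      (\<Sum>y\<in>{0..<n}. if x \<in> T \<and> y \<in> T then (if x = y then of_nat (card T) else 0) * f y - f y else 0)"
    using x unfolding tree_mat_def by (auto simp: mult_mat_vec_def scalar_prod_def algebra_simps intro!: sum.cong)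
  also have "\<dots> = (if x \<in> T then \<Sum>y\<in>T. (if x = y then of_nat (card T) * f y else 0) - f y else 0)"
    using T by (auto simp: sum.inter_restrict[symmetric] Int_absorb1 intro!: sum.cong)
  also have "\<dots> = (if x \<in> T then of_nat (card T) * f x - sum f T else 0)"
    using T finite_subset[OF T] by (simp add: sum_subtractf)
  finally show ?thesis .
qed

lemma tree_mat_mult_vec_const:
  assumes "T \<subseteq> {0..<n}" "x < n" and const: "\<And>y. y \<in> T \<Longrightarrow> f y = c"
  shows "(tree_mat n T *\<^sub>v vec n f) $ x = 0"
proof -
  have "sum f T = of_nat (card T) * c" using const by simp
  then show ?thesis using tree_mat_mult_vec[OF assms(1,2)] const by simp
qed

lemma tree_mat_mult_vec_balanced:
  assumes "T \<subseteq> {0..<n}" "x < n" and supp: "\<And>y. y \<notin> T \<Longrightarrow> f y = 0" and "sum f T = 0"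
  shows "(tree_mat n T *\<^sub>v vec n f) $ x = of_nat (card T) * f x"
  using tree_mat_mult_vec[OF assms(1,2)] assms(4) supp by simp

lemma species_mat_mult_vec:
  assumes "finite R" and x: "x < n"
  shows "(species_mat n R lam *\<^sub>v vec n f) $ x = (\<Sum>T\<in>R. lam T * (tree_mat n T *\<^sub>v vec n f) $ x)"
proof -
  have "(species_mat n R lam *\<^sub>v vec n f) $ x = (\<Sum>y\<in>{0..<n}. \<Sum>T\<in>R. lam T * tree_mat n T $$ (x,y) * f y)"
    using x by (simp add: species_mat_def scalar_prod_def sum_distrib_right)
  also have "\<dots> = (\<Sum>T\<in>R. lam T * (\<Sum>y\<in>{0..<n}. tree_mat n T $$ (x,y) * f y))"
    by (simp add: sum.swap[of _ R] sum_distrib_left mult.assoc)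
  also have "\<dots> = (\<Sum>T\<in>R. lam T * (tree_mat n T *\<^sub>v vec n f) $ x)"
    using x by (simp add: scalar_prod_def)
  finally show ?thesis .
qed

section \<open>Blocks of a species of tree\<close>

locale tree_species =
  fixes n :: nat and R :: "nat set set"
  assumes species: "species_of_tree n R"
begin

lemma ground_mem: "{0..<n} \<in> R"
  and mem_subset: "T \<in> R \<Longrightarrow> T \<subseteq> {0..<n}"
  and two_le_card: "T \<in> R \<Longrightarrow> 2 \<le> card T"
  and laminar: "S \<in> R \<Longrightarrow> T \<in> R \<Longrightarrow> S \<inter> T = {} \<or> S \<subseteq> T \<or> T \<subseteq> S"
  using species unfolding species_of_tree_def by blast+

lemma nested: "S \<in> R \<Longrightarrow> T \<in> R \<Longrightarrow> x \<in> S \<Longrightarrow> x \<in> T \<Longrightarrow> S \<subseteq> T \<or> T \<subseteq> S"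
  using laminar by blast

lemma finite_species: "finite R"
  using mem_subset by (blast intro: finite_subset[of R "Pow {0..<n}"])

lemma finite_mem: "T \<in> R \<Longrightarrow> finite T"
  using mem_subset finite_subset by blast

lemma two_le_n: "2 \<le> n"
  using two_le_card[OF ground_mem] by simp

definition block :: "nat set \<Rightarrow> nat \<Rightarrow> nat set" where
  "block T x = insert x (\<Union>{S\<in>R. x \<in> S \<and> S \<subset> T})"

lemma block_mem: "x \<in> block T x"
  unfolding block_def by blast

lemma block_subset: "x \<in> T \<Longrightarrow> block T x \<subseteq> T"
  unfolding block_def by blast

lemma subset_block: "S \<in> R \<Longrightarrow> S \<subset> T \<Longrightarrow> x \<in> S \<Longrightarrow> S \<subseteq> block T x"
  unfolding block_def by blast

lemma block_sym: "y \<in> block T x \<Longrightarrow> x \<in> block T y"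
  unfolding block_def by blast

lemma block_eq:
  assumes "y \<in> block T x"
  shows "block T y = block T x"
proof -
  have "z \<in> block T x" if xy: "y \<in> block T x" and yz: "z \<in> block T y" for x y z
  proof (cases "y = x \<or> z = y")
    case False
    obtain S where "S \<in> R" "S \<subset> T" "x \<in> S" "y \<in> S"
      using xy False unfolding block_def by auto
    moreover obtain S' where "S' \<in> R" "S' \<subset> T" "y \<in> S'" "z \<in> S'"
      using yz False unfolding block_def by auto
    ultimately show ?thesis using nested[of S S' y] subset_block by blast
  qed (use xy yz in auto)
  then show ?thesis using assms block_sym by blast
qed

lemma mem_block_iff: "x \<in> block T y \<longleftrightarrow> block T x = block T y"
  using block_eq block_mem by metis

lemma greatest_containing:
  assumes "F \<subseteq> R" "F \<noteq> {}" "\<And>S. S \<in> F \<Longrightarrow> x \<in> S"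
  shows "\<exists>M\<in>F. \<forall>S\<in>F. S \<subseteq> M"
proof -
  have "finite F" using assms(1) finite_species finite_subset by blast
  then obtain M where M: "M \<in> F" "\<forall>S\<in>F. M \<subseteq> S \<longrightarrow> M = S"
    using finite_has_maximal assms(2) by blast
  have "S \<subseteq> M" if "S \<in> F" for S
    using nested[of M S x] M that assms(1,3) by blast
  with M(1) show ?thesis by blast
qed

lemma least_containing:
  assumes "F \<subseteq> R" "F \<noteq> {}" "\<And>S. S \<in> F \<Longrightarrow> x \<in> S"
  shows "\<exists>M\<in>F. \<forall>S\<in>F. M \<subseteq> S"
proof -
  have "finite F" using assms(1) finite_species finite_subset by blast
  then obtain M where M: "M \<in> F" "\<forall>S\<in>F. S \<subseteq> M \<longrightarrow> M = S"
    using finite_has_minimal assms(2) by blast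
  have "M \<subseteq> S" if "S \<in> F" for S
    using nested[of M S x] M that assms(1,3) by blast
  with M(1) show ?thesis by blast
qed

lemma block_neq:
  assumes T: "T \<in> R" and x: "x \<in> T"
  shows "block T x \<noteq> T"
proof (cases "{S\<in>R. x \<in> S \<and> S \<subset> T} = {}")
  case True
  then have "block T x = {x}" unfolding block_def by auto
  then show ?thesis using two_le_card[OF T] by auto
next
  case False
  then obtain M where "M \<in> R" "x \<in> M" "M \<subset> T" "\<forall>S\<in>{S\<in>R. x \<in> S \<and> S \<subset> T}. S \<subseteq> M"
    using greatest_containing[of "{S\<in>R. x \<in> S \<and> S \<subset> T}" x] by blast
  then have "block T x = M" unfolding block_def by blast
  then show ?thesis using \<open>M \<subset> T\<close> by blast
qed

definition min_tree :: "nat \<Rightarrow> nat set" where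
  "min_tree i = \<Inter>{S\<in>R. i \<in> S \<and> (\<exists>x\<in>S. x < i)}"

lemma min_tree_subset: "S \<in> R \<Longrightarrow> i \<in> S \<Longrightarrow> x \<in> S \<Longrightarrow> x < i \<Longrightarrow> min_tree i \<subseteq> S"
  unfolding min_tree_def by blast

lemma min_tree_eqI:
  assumes "T \<in> R" "i \<in> T" "x \<in> T" "x < i"
    and "\<And>S y. S \<in> R \<Longrightarrow> i \<in> S \<Longrightarrow> y \<in> S \<Longrightarrow> y < i \<Longrightarrow> T \<subseteq> S"
  shows "min_tree i = T"
  using assms unfolding min_tree_def by blast

lemma
  assumes "0 < i" "i < n"
  shows min_tree_mem: "min_tree i \<in> R" and mem_min_tree: "i \<in> min_tree i"
    and min_tree_lower: "\<exists>x\<in>min_tree i. x < i"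
proof -
  let ?F = "{S\<in>R. i \<in> S \<and> (\<exists>x\<in>S. x < i)}"
  have "{0..<n} \<in> ?F" using ground_mem assms by auto
  then obtain M where M: "M \<in> ?F" "\<forall>S\<in>?F. M \<subseteq> S"
    using least_containing[of ?F i] by blast
  then have "min_tree i = M" unfolding min_tree_def by blast
  then show "min_tree i \<in> R" "i \<in> min_tree i" "\<exists>x\<in>min_tree i. x < i" using M(1) by auto
qed

definition head_block :: "nat \<Rightarrow> nat set" where
  "head_block i = block (min_tree i) i"

definition low_blocks :: "nat \<Rightarrow> nat set" where
  "low_blocks i = {x \<in> min_tree i. \<exists>y\<in>block (min_tree i) x. y < i}"

abbreviation weight_support :: "nat \<Rightarrow> nat set" where
  "weight_support i \<equiv> low_blocks i \<union> head_block i"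

definition weight :: "nat \<Rightarrow> nat \<Rightarrow> rat" where
  "weight i x = (if x \<in> low_blocks i then of_nat (card (head_block i))
     else if x \<in> head_block i then - of_nat (card (low_blocks i)) else 0)"

lemma weight_eq_0: "x \<notin> weight_support i \<Longrightarrow> weight i x = 0"
  unfolding weight_def by simp

context
  fixes i assumes i: "0 < i" "i < n"
begin

lemma head_block_subset: "head_block i \<subseteq> min_tree i"
  unfolding head_block_def using block_subset mem_min_tree[OF i] by blast

lemma low_blocks_subset: "low_blocks i \<subseteq> min_tree i"
  unfolding low_blocks_def by blast

lemma weight_support_subset: "weight_support i \<subseteq> {0..<n}"
  using head_block_subset low_blocks_subset mem_subset[OF min_tree_mem[OF i]] by blast

lemma mem_head_block: "i \<in> head_block i"
  unfolding head_block_def by (rule block_mem)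

lemma head_block_ge: "y \<in> head_block i \<Longrightarrow> i \<le> y"
proof (rule ccontr)
  assume y: "y \<in> head_block i" "\<not> i \<le> y"
  then have "y \<noteq> i" by simp
  with y(1) obtain S where S: "S \<in> R" "i \<in> S" "S \<subset> min_tree i" "y \<in> S"
    unfolding head_block_def block_def by blast
  moreover have "y < i" using y(2) by simp
  ultimately have "min_tree i \<subseteq> S" using min_tree_subset by blast
  with S(3) show False by blast
qed

lemma low_blocks_disjoint: "x \<in> low_blocks i \<Longrightarrow> x \<notin> head_block i"
proof
  assume x: "x \<in> low_blocks i" "x \<in> head_block i"
  then obtain y where y: "y \<in> block (min_tree i) x" "y < i" unfolding low_blocks_def by blast
  have "block (min_tree i) x = head_block i" using x(2) block_eq unfolding head_block_def by blast
  then have "i \<le> y" using y(1) head_block_ge by blast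
  with y(2) show False by simp
qed

lemma low_blocks_nonempty: "low_blocks i \<noteq> {}"
  using min_tree_lower[OF i] block_mem unfolding low_blocks_def by blast

lemma sum_weight: "sum (weight i) (weight_support i) = 0"
proof -
  have fin: "finite (low_blocks i)" "finite (head_block i)"
    using weight_support_subset finite_subset by auto
  have disj: "low_blocks i \<inter> head_block i = {}" using low_blocks_disjoint by blast
  have low: "sum (weight i) (low_blocks i) = of_nat (card (low_blocks i) * card (head_block i))"
    unfolding weight_def by simp
  have head: "sum (weight i) (head_block i) = (\<Sum>x\<in>head_block i. - of_nat (card (low_blocks i)))"
    using low_blocks_disjoint unfolding weight_def by (intro sum.cong) auto
  show ?thesis unfolding sum.union_disjoint[OF fin disj] low head by simp
qed

lemma weight_const:
  assumes "S \<in> R" "S \<subset> min_tree i" "a \<in> S" "b \<in> S"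
  shows "weight i a = weight i b"
proof -
  have "b \<in> block (min_tree i) a" using subset_block[OF assms(1,2,3)] assms(4) by blast
  then have ab: "block (min_tree i) a = block (min_tree i) b" by (simp add: mem_block_iff)
  have "a \<in> min_tree i" "b \<in> min_tree i" using assms by auto
  with ab show ?thesis
    unfolding weight_def low_blocks_def head_block_def mem_block_iff[of _ _ i] by simp
qed

lemma weight_self_neq_0: "weight i i \<noteq> 0"
proof -
  have "finite (low_blocks i)" using weight_support_subset finite_subset by blast
  then have "card (low_blocks i) \<noteq> 0" using low_blocks_nonempty by simp
  then show ?thesis using low_blocks_disjoint mem_head_block unfolding weight_def by auto
qed

end

section \<open>The eigenbasis\<close>

definition tree_eigenvalue :: "(nat set \<Rightarrow> rat) \<Rightarrow> nat set \<Rightarrow> rat" where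
  "tree_eigenvalue lam T1 = (\<Sum>T\<in>{T\<in>R. T1 \<subseteq> T}. lam T * of_nat (card T))"

lemma species_mat_mult_vec_eigen:
  assumes T1: "T1 \<in> R" and supp: "\<And>y. y \<notin> T1 \<Longrightarrow> f y = 0" and balanced: "sum f T1 = 0"
    and const: "\<And>S a b. S \<in> R \<Longrightarrow> S \<subset> T1 \<Longrightarrow> a \<in> S \<Longrightarrow> b \<in> S \<Longrightarrow> f a = f b"
  shows "species_mat n R lam *\<^sub>v vec n f = tree_eigenvalue lam T1 \<cdot>\<^sub>v vec n f"
proof (rule eq_vecI)
  fix x assume "x < dim_vec (tree_eigenvalue lam T1 \<cdot>\<^sub>v vec n f)"
  then have x: "x < n" by simp
  have "lam T * (tree_mat n T *\<^sub>v vec n f) $ x = (if T1 \<subseteq> T then lam T * of_nat (card T) * f x else 0)"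
    if T: "T \<in> R" for T
  proof (cases "T1 \<subseteq> T")
    case True
    have "sum f T = sum f T1"
      using True finite_mem[OF T] supp by (intro sum.mono_neutral_right) auto
    then show ?thesis
      using True tree_mat_mult_vec_balanced[OF mem_subset[OF T] x, of f] supp balanced by auto
  next
    case False
    then have "T \<inter> T1 = {} \<or> T \<subset> T1" using laminar[OF T T1] by blast
    then have "f a = f b" if "a \<in> T" "b \<in> T" for a b
      using that supp const[OF T] by (metis disjoint_iff)
    then show ?thesis
      using False tree_mat_mult_vec_const[OF mem_subset[OF T] x] by (metis mult_zero_right)
  qed
  then have "(species_mat n R lam *\<^sub>v vec n f) $ x
      = (\<Sum>T\<in>R. if T1 \<subseteq> T then lam T * of_nat (card T) * f x else 0)"
    using species_mat_mult_vec[OF finite_species x] by simp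
  also have "\<dots> = tree_eigenvalue lam T1 * f x"
    unfolding tree_eigenvalue_def by (simp add: sum.inter_filter[OF finite_species, symmetric] sum_distrib_right)
  finally show "(species_mat n R lam *\<^sub>v vec n f) $ x = (tree_eigenvalue lam T1 \<cdot>\<^sub>v vec n f) $ x"
    using x by simp
qed simp

definition eigvec :: "nat \<Rightarrow> nat \<Rightarrow> rat" where
  "eigvec i = (if i = 0 then (\<lambda>_. 1) else weight i)"

definition eigval :: "(nat set \<Rightarrow> rat) \<Rightarrow> nat \<Rightarrow> rat" where
  "eigval lam i = (if i = 0 then 0 else tree_eigenvalue lam (min_tree i))"

lemma species_mat_mult_eigvec:
  assumes i: "i < n"
  shows "species_mat n R lam *\<^sub>v vec n (eigvec i) = eigval lam i \<cdot>\<^sub>v vec n (eigvec i)"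
proof (cases "i = 0")
  case True
  have "(tree_mat n T *\<^sub>v vec n (\<lambda>_. 1)) $ x = 0" if "T \<in> R" "x < n" for T x
    using tree_mat_mult_vec_const[OF mem_subset[OF that(1)] that(2), of "\<lambda>_. 1" 1] by simp
  then have "(species_mat n R lam *\<^sub>v vec n (\<lambda>_. 1)) $ x = 0" if "x < n" for x
    using species_mat_mult_vec[OF finite_species that] that by simp
  then show ?thesis
    using True unfolding eigvec_def eigval_def by (intro eq_vecI) simp_all
next
  case False
  then have i: "0 < i" "i < n" using i by auto
  have "species_mat n R lam *\<^sub>v vec n (weight i) = tree_eigenvalue lam (min_tree i) \<cdot>\<^sub>v vec n (weight i)"
  proof (rule species_mat_mult_vec_eigen[OF min_tree_mem[OF i]])
    show "weight i y = 0" if "y \<notin> min_tree i" for y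
      using that weight_eq_0 head_block_subset[OF i] low_blocks_subset[OF i] by blast
    have "sum (weight i) (min_tree i) = sum (weight i) (weight_support i)"
      using finite_mem[OF min_tree_mem[OF i]] head_block_subset[OF i] low_blocks_subset[OF i] weight_eq_0
      by (intro sum.mono_neutral_right) auto
    then show "sum (weight i) (min_tree i) = 0" using sum_weight[OF i] by simp
  qed (rule weight_const[OF i])
  then show ?thesis using False unfolding eigvec_def eigval_def by simp
qed

lemma weight_support_subset_low_blocks:
  assumes i: "0 < i" "i < n" and "i < j" and same: "min_tree i = min_tree j"
  shows "weight_support i \<subseteq> low_blocks j"
proof
  fix x assume x: "x \<in> weight_support i"
  have "\<exists>y\<in>block (min_tree i) x. y < j"
  proof (cases "x \<in> low_blocks i")
    case True
    then obtain y where "y \<in> block (min_tree i) x" "y < i" unfolding low_blocks_def by blast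
    then show ?thesis using \<open>i < j\<close> by (meson less_trans)
  next
    case False
    then have "i \<in> block (min_tree i) x"
      using x mem_block_iff block_mem unfolding head_block_def by blast
    then show ?thesis using \<open>i < j\<close> by blast
  qed
  moreover have "x \<in> min_tree i" using x low_blocks_subset[OF i] head_block_subset[OF i] by blast
  ultimately show "x \<in> low_blocks j" using same unfolding low_blocks_def by auto
qed

lemma weight_const_on_support:
  assumes "0 < i" "i < j" "j < n"
  shows "(\<exists>c. \<forall>x\<in>weight_support i. weight j x = c) \<or>
    (\<exists>c. \<forall>x\<in>weight_support j. weight i x = c)"
proof -
  have i: "0 < i" "i < n" and j: "0 < j" "j < n" using assms by auto
  have supp_i: "weight_support i \<subseteq> min_tree i"
    using low_blocks_subset[OF i] head_block_subset[OF i] by blast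
  have supp_j: "weight_support j \<subseteq> min_tree j"
    using low_blocks_subset[OF j] head_block_subset[OF j] by blast
  consider "min_tree i \<inter> min_tree j = {}" | "min_tree i = min_tree j"
    | "min_tree i \<subset> min_tree j" | "min_tree j \<subset> min_tree i"
    using laminar[OF min_tree_mem[OF i] min_tree_mem[OF j]] by blast
  then show ?thesis
  proof cases
    case 1
    then have "\<forall>x\<in>weight_support i. weight j x = 0"
      using supp_i supp_j weight_eq_0 by blast
    then show ?thesis by blast
  next
    case 2
    then have "weight_support i \<subseteq> low_blocks j"
      by (rule weight_support_subset_low_blocks[OF i assms(2)])
    then have "\<forall>x\<in>weight_support i. weight j x = of_nat (card (head_block j))"
      unfolding weight_def by auto
    then show ?thesis by blast
  next
    case 3
    then have "\<forall>x\<in>weight_support i. weight j x = weight j i"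
      using weight_const[OF j min_tree_mem[OF i] 3] supp_i mem_min_tree[OF i] by blast
    then show ?thesis by blast
  next
    case 4
    then have "\<forall>x\<in>weight_support j. weight i x = weight i j"
      using weight_const[OF i min_tree_mem[OF j] 4] supp_j mem_min_tree[OF j] by blast
    then show ?thesis by blast
  qed
qed

lemma eigvec_orthogonal_less:
  assumes ij: "i < j" and j: "j < n"
  shows "(\<Sum>x\<in>{0..<n}. eigvec i x * eigvec j x) = 0"
proof -
  have "0 < j" using ij by simp
  note j' = this j
  have sum_j: "sum (weight j) (weight_support j) = 0" by (rule sum_weight[OF j'])
  show ?thesis
  proof (cases "i = 0")
    case True
    have "(\<Sum>x\<in>{0..<n}. weight j x * 1) = 0"
      by (rule sum_mult_eq_0_if_const_on_support[OF finite_atLeastLessThan weight_support_subset[OF j'] weight_eq_0 sum_j, of _ 1]) simp_all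
    then show ?thesis using True j'(1) unfolding eigvec_def by simp
  next
    case False
    then have i: "0 < i" "i < n" using ij j by auto
    from weight_const_on_support[OF i(1) ij j]
    have "(\<Sum>x\<in>{0..<n}. weight i x * weight j x) = 0"
    proof
      assume "\<exists>c. \<forall>x\<in>weight_support i. weight j x = c"
      then show ?thesis
        using sum_mult_eq_0_if_const_on_support[where u = "weight i", OF finite_atLeastLessThan weight_support_subset[OF i] weight_eq_0 sum_weight[OF i]]
        by blast
    next
      assume "\<exists>c. \<forall>x\<in>weight_support j. weight i x = c"
      then have "(\<Sum>x\<in>{0..<n}. weight j x * weight i x) = 0"
        using sum_mult_eq_0_if_const_on_support[where u = "weight j", OF finite_atLeastLessThan weight_support_subset[OF j'] weight_eq_0 sum_j]
        by blast
      then show ?thesis by (simp add: mult.commute)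
    qed
    then show ?thesis using i(1) j'(1) unfolding eigvec_def by simp
  qed
qed

lemma eigvec_orthogonal:
  assumes "i < n" "j < n" "i \<noteq> j"
  shows "vec n (eigvec i) \<bullet> vec n (eigvec j) = 0"
proof -
  have "(\<Sum>x\<in>{0..<n}. eigvec i x * eigvec j x) = 0"
  proof (cases "i < j")
    case False
    then have "(\<Sum>x\<in>{0..<n}. eigvec j x * eigvec i x) = 0"
      using eigvec_orthogonal_less assms by simp
    then show ?thesis by (simp add: mult.commute)
  qed (use eigvec_orthogonal_less assms in simp)
  then show ?thesis by (simp add: scalar_prod_def)
qed

lemma eigvec_nondegenerate:
  assumes i: "i < n"
  shows "vec n (eigvec i) \<bullet> vec n (eigvec i) \<noteq> 0"
proof -
  have "eigvec i i \<noteq> 0" using weight_self_neq_0[of i] i unfolding eigvec_def by auto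
  then have "0 < (\<Sum>x\<in>{0..<n}. eigvec i x * eigvec i x)"
    using i by (intro sum_pos2[of _ i]) (auto simp: zero_less_mult_iff linorder_neq_iff)
  then show ?thesis by (simp add: scalar_prod_def)
qed

lemma min_tree_surj:
  assumes T1: "T1 \<in> R"
  obtains i where "0 < i" "i < n" "min_tree i = T1"
proof -
  have fin: "finite T1" and "T1 \<noteq> {}" using finite_mem[OF T1] two_le_card[OF T1] by auto
  define m where "m = Min T1"
  have m: "m \<in> T1" unfolding m_def using fin \<open>T1 \<noteq> {}\<close> by simp
  obtain y where y: "y \<in> T1" "y \<notin> block T1 m"
    using block_neq[OF T1 m] block_subset[OF m] by blast
  have fin_y: "finite (block T1 y)" using block_subset[OF y(1)] fin finite_subset by blast
  define i where "i = Min (block T1 y)"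
  have i_block: "i \<in> block T1 y" unfolding i_def using fin_y block_mem by (metis Min_in empty_iff)
  then have block_i: "block T1 i = block T1 y" by (rule block_eq)
  have iT: "i \<in> T1" using i_block block_subset[OF y(1)] by blast
  have "m \<noteq> i" using block_i y(2) block_mem by metis
  moreover have "m \<le> i" unfolding m_def using fin iT by simp
  ultimately have "m < i" by simp
  have "min_tree i = T1"
  proof (rule min_tree_eqI[OF T1 iT m \<open>m < i\<close>])
    fix S x assume S: "S \<in> R" "i \<in> S" "x \<in> S" "x < i"
    show "T1 \<subseteq> S"
    proof (rule ccontr)
      assume "\<not> T1 \<subseteq> S"
      then have "S \<subset> T1" using nested[OF S(1) T1 S(2) iT] by blast
      then have "x \<in> block T1 y" using subset_block[OF S(1) _ S(2)] S(3) block_i by blast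
      then have "i \<le> x" unfolding i_def using fin_y by simp
      with S(4) show False by simp
    qed
  qed
  moreover have "0 < i" "i < n" using \<open>m < i\<close> iT mem_subset[OF T1] by auto
  ultimately show thesis using that by blast
qed

lemma eigval_image: "eigval lam ` {0..<n} = insert 0 (tree_eigenvalue lam ` R)"
proof
  show "eigval lam ` {0..<n} \<subseteq> insert 0 (tree_eigenvalue lam ` R)"
  proof
    fix k assume "k \<in> eigval lam ` {0..<n}"
    then obtain i where "i < n" "k = eigval lam i" by auto
    then show "k \<in> insert 0 (tree_eigenvalue lam ` R)"
      using min_tree_mem[of i] unfolding eigval_def by (cases "i = 0") auto
  qed
  have "0 \<in> eigval lam ` {0..<n}"
    using two_le_n by (intro image_eqI[of _ _ 0]) (simp_all add: eigval_def)
  moreover have "tree_eigenvalue lam T1 \<in> eigval lam ` {0..<n}" if T1: "T1 \<in> R" for T1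
  proof -
    obtain i where i: "0 < i" "i < n" "min_tree i = T1" using min_tree_surj[OF T1] .
    then show ?thesis by (intro image_eqI[of _ _ i]) (simp_all add: eigval_def)
  qed
  ultimately show "insert 0 (tree_eigenvalue lam ` R) \<subseteq> eigval lam ` {0..<n}" by blast
qed

end

theorem mainTheorem8:
  fixes n :: nat and R :: "nat set set" and lam :: "nat set \<Rightarrow> rat"
  assumes "species_of_tree n R"
  shows "diagonalizable_mat (species_mat n R lam) \<and>
    {k. eigenvalue (species_mat n R lam) k} =
      insert 0 ((\<lambda>T1. \<Sum>T\<in>{T\<in>R. T1 \<subseteq> T}. lam T * of_nat (card T)) ` R)"
proof -
  interpret tree_species n R by (rule tree_species.intro) (rule assms)
  have A: "species_mat n R lam \<in> carrier_mat n n" by (rule carrier_matI) simp_all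
  have "diagonalizable_mat (species_mat n R lam) \<and>
      {k. eigenvalue (species_mat n R lam) k} = eigval lam ` {0..<n}"
    by (rule orthogonal_eigenbasis_diagonalizable[OF A vec_carrier species_mat_mult_eigvec
          eigvec_orthogonal eigvec_nondegenerate])
  then show ?thesis unfolding eigval_image tree_eigenvalue_def .
qed

end
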